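(* Let $k\ge2$ and let $G=(\{a,b\},\varphi,a)$ be a circular D0L-system with $\varphi$ $k$-uniform. Then no vertex of the graph of overhangs $GO_G$ carries two distinct loops (two distinct edges from the vertex to itself).
   Context: A D0L-system $G=(\mathcal{A},\varphi,w)$ has $L(G)=\{\varphi^n(w)\}$ and $S(L(G))$ the set of factors of its words. An interpretation of $u\in S(L(G))$ is $(p,v,s)$ with $v\in S(L(G))$, $\varphi(v)=pus$. With $v=v_1\cdots v_n$, $v'=v'_1\cdots v'_m$, $u=u_1\cdots u_\ell$, interpretations $(p,v,s),(p',v',s')$ are synchronized at position $j$ if $\varphi(v_1\cdots v_i)=pu_1\cdots u_j$ and $\varphi(v'_1\cdots v'_{i'})=p'u_1\cdots u_j$ for some $i,i'$; $u$ has a synchronizing point at $j$ if all its interpretations are pairwise synchronized at $j$. A PD0L-system injective on $S(L(G))$ is circular if there is $Z$ such that every $u\in S(L(G))$ with $|u|>Z$ has a synchronizing point. $\varphi$ is $k$-uniform if $|\varphi(a)|=|\varphi(b)|=k$. Let $X=\{\varphi(a),\varphi(b)\}$. An overhang is a triple $(u_1\cdots u_m,v_1\cdots v_n,|x|)$ with $u_i,v_j\in X$, $x$ nonempty, such that: (i) $x$ is a suffix of $u_1\cdots u_m$ but not of $u_2\cdots u_m$; (ii) $x$ is a prefix of $v_1\cdots v_n$ but not of $v_1\cdots v_{n-1}$; (iii) $x\ne u_1\cdots u_m$ or $x\ne v_1\cdots v_n$; (iv) $|v_1\cdots v_{n-1}|<|x(u_2\cdots u_m)^{-1}|$. Its left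 overhang is $u_1\cdots u_mx^{-1}$, right overhang $x^{-1}v_1\cdots v_n$. $GO_G$ has an edge from $s_1$ to $s_2$ labelled by each overhang with left overhang $s_1$ and right overhang $s_2$. *)

theory Defs
  imports Main "HOL-Library.Sublist"
begin

datatype letter = La | Lb

type_synonym word = "letter list"

definition morph :: "(letter \<Rightarrow> word) \<Rightarrow> word \<Rightarrow> word" where
  "morph f w = concat (map f w)"

definition d0l_language :: "(letter \<Rightarrow> word) \<Rightarrow> word \<Rightarrow> word set" where
  "d0l_language f ax = {(morph f ^^ n) ax | n. True}"

definition factors :: "word set \<Rightarrow> word set" where
  "factors L = {u. \<exists>w\<in>L. \<exists>p s. w = p @ u @ s}"

abbreviation SL :: "(letter \<Rightarrow> word) \<Rightarrow> word \<Rightarrow> word set" where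
  "SL f ax \<equiv> factors (d0l_language f ax)"

definition interp :: "(letter \<Rightarrow> word) \<Rightarrow> word \<Rightarrow> word \<Rightarrow> word \<times> word \<times> word \<Rightarrow> bool" where
  "interp f ax u I \<longleftrightarrow>
     (case I of (p, v, s) \<Rightarrow> v \<in> SL f ax \<and> morph f v = p @ u @ s)"

definition synchronized_at :: "(letter \<Rightarrow> word) \<Rightarrow> word \<Rightarrow> nat \<Rightarrow> word \<times> word \<times> word \<Rightarrow> word \<times> word \<times> word \<Rightarrow> bool" where
  "synchronized_at f u j I I' \<longleftrightarrow>
     (case I of (p, v, s) \<Rightarrow> case I' of (p', v', s') \<Rightarrow>
        \<exists>i i'. i \<le> length v \<and> i' \<le> length v' \<and>
          morph f (take i v) = p @ take j u \<and> morph f (take i' v') = p' @ take j u)"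

definition has_sync_point_at :: "(letter \<Rightarrow> word) \<Rightarrow> word \<Rightarrow> word \<Rightarrow> nat \<Rightarrow> bool" where
  "has_sync_point_at f ax u j \<longleftrightarrow> j \<le> length u \<and>
     (\<forall>I I'. interp f ax u I \<longrightarrow> interp f ax u I' \<longrightarrow> synchronized_at f u j I I')"

definition circular :: "(letter \<Rightarrow> word) \<Rightarrow> word \<Rightarrow> bool" where
  "circular f ax \<longleftrightarrow>
     (\<forall>c. f c \<noteq> []) \<and> inj_on (morph f) (SL f ax) \<and>
     (\<exists>Z::nat. \<forall>u\<in>SL f ax. length u > Z \<longrightarrow> (\<exists>j. has_sync_point_at f ax u j))"

definition uniform :: "nat \<Rightarrow> (letter \<Rightarrow> word) \<Rightarrow> bool" where
  "uniform k f \<longleftrightarrow> length (f La) = k \<and> length (f Lb) = k"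

definition overhang :: "(letter \<Rightarrow> word) \<Rightarrow> word \<times> word \<times> nat \<Rightarrow> bool" where
  "overhang f ov \<longleftrightarrow> (case ov of (U, V, l) \<Rightarrow>
     \<exists>us vs x. us \<noteq> [] \<and> vs \<noteq> [] \<and> set us \<subseteq> {f La, f Lb} \<and> set vs \<subseteq> {f La, f Lb} \<and>
       U = concat us \<and> V = concat vs \<and> x \<noteq> [] \<and> l = length x \<and>
       suffix x (concat us) \<and> \<not> suffix x (concat (tl us)) \<and>
       prefix x (concat vs) \<and> \<not> prefix x (concat (butlast vs)) \<and>
       (x \<noteq> concat us \<or> x \<noteq> concat vs) \<and>
       length (concat (butlast vs)) < length x - length (concat (tl us)))"

text \<open>Left overhang U x^{-1} and right overhang x^{-1} V.\<close>
definition left_overhang :: "word \<times> word \<times> nat \<Rightarrow> word" where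
  "left_overhang ov = (case ov of (U, V, l) \<Rightarrow> take (length U - l) U)"

definition right_overhang :: "word \<times> word \<times> nat \<Rightarrow> word" where
  "right_overhang ov = (case ov of (U, V, l) \<Rightarrow> drop l V)"

definition GO_edge :: "(letter \<Rightarrow> word) \<Rightarrow> word \<Rightarrow> word \<times> word \<times> nat \<Rightarrow> word \<Rightarrow> bool" where
  "GO_edge f s1 ov s2 \<longleftrightarrow> overhang f ov \<and> left_overhang ov = s1 \<and> right_overhang ov = s2"

end

theory Submission
  imports Defs
begin

text \<open>A loop at a vertex s is an overhang (U, V, |x|) with U = s x and V = x s. For a uniform
  morphism U and V have the same number of blocks, and the overlap condition then leaves room
  for only one block each, so s x and x s are images of letters. Two distinct loops at s thus give
  {\<phi>(a), \<phi>(b)} = {s x1, s x2} with |x1| = |x2| and each xi s in this set.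
  Cancellation forces either both xi to commute with s, or both to commute with s s; but two words of
  the same length commuting with the same nonempty word are equal.\<close>

lemma append_comm_power:
  assumes "y @ t = t @ y"
  shows "y @ concat (replicate n t) = concat (replicate n t) @ y"
proof (induction n)
  case (Suc n)
  have "y @ concat (replicate (Suc n) t) = (y @ t) @ concat (replicate n t)" by simp
  also have "\<dots> = t @ y @ concat (replicate n t)" using assms by simp
  also have "\<dots> = concat (replicate (Suc n) t) @ y" using Suc.IH by simp
  finally show ?case .
qed simp

lemma append_comm_eq_take_power:
  assumes "y @ t = t @ y" and "t \<noteq> []"
  shows "y = take (length y) (concat (replicate (length y) t))"
proof -
  let ?p = "concat (replicate (length y) t)"
  have "length y \<le> length ?p"
    using assms(2) by (auto simp: length_concat sum_list_replicate Suc_le_eq)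
  have "y = take (length y) (y @ ?p)" by simp
  also have "\<dots> = take (length y) (?p @ y)" using append_comm_power[OF assms(1)] by simp
  also have "\<dots> = take (length y) ?p" using \<open>length y \<le> length ?p\<close> by simp
  finally show ?thesis .
qed

lemma append_comm_same_length_eq:
  assumes "x @ t = t @ x" and "y @ t = t @ y" and "t \<noteq> []" and "length x = length y"
  shows "x = y"
  using append_comm_eq_take_power[OF assms(1,3)] append_comm_eq_take_power[OF assms(2,3)] assms(4)
  by simp

lemma conjugates_of_common_prefix_eq:
  assumes "x @ s \<in> {s @ x, s @ y}" and "y @ s \<in> {s @ x, s @ y}"
    and "s \<noteq> []" and "length x = length y"
  shows "x = y"
proof (rule ccontr)
  assume "x \<noteq> y"
  with assms(1,2) consider "x @ s = s @ x" "y @ s = s @ y" | "x @ s = s @ y" "y @ s = s @ x"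
    by (metis append_same_eq insert_iff singletonD)
  then show False
  proof cases
    case 1
    then show False using append_comm_same_length_eq assms(3,4) \<open>x \<noteq> y\<close> by blast
  next
    case 2
    then have "x @ (s @ s) = (s @ s) @ x" "y @ (s @ s) = (s @ s) @ y"
      by (metis append.assoc)+
    then show False using append_comm_same_length_eq assms(3,4) \<open>x \<noteq> y\<close> by blast
  qed
qed

lemma length_concat_uniform:
  assumes "uniform k f" and "set us \<subseteq> {f La, f Lb}"
  shows "length (concat us) = k * length us"
  using assms(2) by (induction us) (use assms(1) in \<open>auto simp: uniform_def\<close>)

lemma suffix_append_not_suffix_longer:
  "suffix x (a @ b) \<Longrightarrow> \<not> suffix x b \<Longrightarrow> length b < length x"
  by (metis linorder_not_less suffix_append suffix_length_suffix suffix_appendI suffix_order.order_refl)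

lemma GO_loop_shape:
  assumes "GO_edge f s ov s"
  obtains us vs x where "ov = (s @ x, x @ s, length x)" "s \<noteq> []" "us \<noteq> []" "vs \<noteq> []"
    "set us \<subseteq> {f La, f Lb}" "set vs \<subseteq> {f La, f Lb}" "concat us = s @ x" "concat vs = x @ s"
    "length (concat (butlast vs)) + length (concat (tl us)) < length x"
proof -
  obtain U V l where ov: "ov = (U, V, l)" by (cases ov)
  from assms obtain us vs x where h: "us \<noteq> []" "vs \<noteq> []" "set us \<subseteq> {f La, f Lb}" "set vs \<subseteq> {f La, f Lb}"
    "U = concat us" "V = concat vs" "l = length x"
    "suffix x (concat us)" "\<not> suffix x (concat (tl us))"
    "prefix x (concat vs)"
    "x \<noteq> concat us \<or> x \<noteq> concat vs"
    "length (concat (butlast vs)) < length x - length (concat (tl us))"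
    and L: "take (length U - l) U = s" and R: "drop l V = s"
    unfolding GO_edge_def overhang_def left_overhang_def right_overhang_def ov by auto
  from h(8) obtain p where "concat us = p @ x" by (auto simp: suffix_def)
  with h(5,7) L have U: "concat us = s @ x" by simp
  from h(10) obtain q where "concat vs = x @ q" by (auto simp: prefix_def)
  with h(6,7) R have V: "concat vs = x @ s" by simp
  have "s \<noteq> []" using h(11) U V by auto
  have "concat us = hd us @ concat (tl us)" using h(1) by (cases us) auto
  then have "length (concat (tl us)) < length x"
    using suffix_append_not_suffix_longer h(8,9) by metis
  with h(12) have "length (concat (butlast vs)) + length (concat (tl us)) < length x" by linarith
  with that ov h U V \<open>s \<noteq> []\<close> show ?thesis by blast
qed

lemma uniform_GO_loop_letter_images:
  assumes "uniform k f" and "GO_edge f s ov s"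
  obtains x where "ov = (s @ x, x @ s, length x)" "s \<noteq> []"
    "s @ x \<in> {f La, f Lb}" "x @ s \<in> {f La, f Lb}"
proof -
  obtain us vs x where ov: "ov = (s @ x, x @ s, length x)" and "s \<noteq> []" "us \<noteq> []" "vs \<noteq> []"
    and X: "set us \<subseteq> {f La, f Lb}" "set vs \<subseteq> {f La, f Lb}"
    and U: "concat us = s @ x" and V: "concat vs = x @ s"
    and overlap: "length (concat (butlast vs)) + length (concat (tl us)) < length x"
    using GO_loop_shape[OF assms(2)] .
  have "set (tl us) \<subseteq> {f La, f Lb}" "set (butlast vs) \<subseteq> {f La, f Lb}"
    using X by (auto dest: list.set_sel(2)[OF \<open>us \<noteq> []\<close>] in_set_butlastD)
  then have "k * (length vs - 1) + k * (length us - 1) < length x"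
    using overlap length_concat_uniform[OF assms(1)] by simp
  moreover have "k * length us = k * length vs" "length x \<le> k * length us"
    using length_concat_uniform[OF assms(1)] X U V by (metis length_append add.commute le_add1)+
  moreover have "k > 0"
    using \<open>length x \<le> k * length us\<close> overlap by (cases k) auto
  ultimately have "length vs = length us" "k * (length us - 1) < k * 1"
    using \<open>us \<noteq> []\<close> by (auto simp: diff_mult_distrib2)
  then have "length us = 1" "length vs = 1"
    using \<open>us \<noteq> []\<close> by (auto simp: le_Suc_eq)
  then obtain u v where "us = [u]" "vs = [v]" by (auto simp: length_Suc_conv)
  with that ov \<open>s \<noteq> []\<close> X U V show ?thesis by auto
qed

theorem mainTheorem6:
  fixes f :: "letter \<Rightarrow> word" and k :: nat
  assumes "k \<ge> 2"
    and "uniform k f"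
    and "circular f [La]"
  shows "\<not> (\<exists>s ov1 ov2. ov1 \<noteq> ov2 \<and> GO_edge f s ov1 s \<and> GO_edge f s ov2 s)"
proof
  assume "\<exists>s ov1 ov2. ov1 \<noteq> ov2 \<and> GO_edge f s ov1 s \<and> GO_edge f s ov2 s"
  then obtain s ov1 ov2 where "ov1 \<noteq> ov2" "GO_edge f s ov1 s" "GO_edge f s ov2 s" by blast
  obtain x1 where ov1: "ov1 = (s @ x1, x1 @ s, length x1)" and "s \<noteq> []"
    and x1: "s @ x1 \<in> {f La, f Lb}" "x1 @ s \<in> {f La, f Lb}"
    using uniform_GO_loop_letter_images[OF assms(2) \<open>GO_edge f s ov1 s\<close>] .
  obtain x2 where ov2: "ov2 = (s @ x2, x2 @ s, length x2)"
    and x2: "s @ x2 \<in> {f La, f Lb}" "x2 @ s \<in> {f La, f Lb}"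
    using uniform_GO_loop_letter_images[OF assms(2) \<open>GO_edge f s ov2 s\<close>] .
  have "x1 \<noteq> x2" using \<open>ov1 \<noteq> ov2\<close> ov1 ov2 by auto
  then have "s @ x1 \<noteq> s @ x2" by simp
  then have "{f La, f Lb} = {s @ x1, s @ x2}"
    using x1(1) x2(1) by (metis insert_commute insertE singletonD)
  moreover have "length (s @ x1) = length (s @ x2)"
    using x1(1) x2(1) assms(2) unfolding uniform_def by (auto simp del: length_append)
  ultimately have "x1 = x2"
    using conjugates_of_common_prefix_eq x1(2) x2(2) \<open>s \<noteq> []\<close> by simp
  with \<open>x1 \<noteq> x2\<close> show False ..
qed

end
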